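(* Let $\Theta=\{\theta_0,\ldots,\theta_n\}\subset\mathbb{R}$ and let $F$ and $G$ be experiments with signal spaces $\mathcal{X}=[\underline{x},\overline{x}]$ and $\mathcal{Y}=[\underline{y},\overline{y}]$ and conditional densities $f(\cdot\mid\theta)$, $g(\cdot\mid\theta)$. Then $F\succeq_{\textup{LB}}G$ if and only if, for every $\boldsymbol{b}=(b_0,\ldots,b_n)\in\mathbb{R}^{n+1}$, \[ \int_{\mathcal{X}}\Big(\sum_{i=0}^{n} b_i f(x\mid\theta_i)\Big)_{+}\,dx\;\geq\;\int_{\mathcal{Y}}\Big(\sum_{i=0}^{n} b_i g(y\mid\theta_i)\Big)_{+}\,dy, \] where $(s)_+=\max(s,0)$.
   Context: States: $\Theta=\{\theta_0,\ldots,\theta_n\}\subset\mathbb{R}$. An experiment $F$ specifies, for each $\theta\in\Theta$, an absolutely continuous distribution $F(\cdot\mid\theta)$ with density $f(\cdot\mid\theta)$ of a signal $X$ taking values in a compact interval $\mathcal{X}=[\underline{x},\overline{x}]$; similarly $G$ has densities $g(\cdot\mid\theta)$ on $\mathcal{Y}=[\underline{y},\overline{y}]$ for a signal $Y$. Let $\widehat{\Delta}_n=\{\boldsymbol{q}\in[0,1]^n:\sum_{i=1}^n q_i\le 1\}$; a prior $\boldsymbol{q}=(q_1,\ldots,q_n)\in\widehat{\Delta}_n$ assigns probability $q_i$ to $\theta_i$ ($i\ge1$) and $q_0=1-\sum_{i=1}^n q_i$ to $\theta_0$. Given $\boldsymbol{q}$, $f_{\boldsymbol{q}}=\sum_{i=0}^n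 q_i f(\cdot\mid\theta_i)$ is the unconditional density of $X$ (distribution $F_{\boldsymbol{q}}$), and the posterior vector is $\boldsymbol{p}_F(x;\boldsymbol{q})=(p_{F,1}(x;\boldsymbol{q}),\ldots,p_{F,n}(x;\boldsymbol{q}))$ with $p_{F,i}(x;\boldsymbol{q})=q_i f(x\mid\theta_i)/f_{\boldsymbol{q}}(x)$; $\boldsymbol{p}_F(\boldsymbol{q})$ denotes the random vector $\boldsymbol{p}_F(X;\boldsymbol{q})$ with $X\sim F_{\boldsymbol{q}}$ (analogously for $G$). For random vectors $\boldsymbol{\mu},\boldsymbol{\nu}$ in $\mathbb{R}^n$ with equal means: $\boldsymbol{\mu}\succeq_{\textup{cx}}\boldsymbol{\nu}$ (convex order) if $\mathbb{E}[C(\boldsymbol{\mu})]\ge\mathbb{E}[C(\boldsymbol{\nu})]$ for all convex $C:\mathbb{R}^n\to\mathbb{R}$; $\boldsymbol{\mu}\succeq_{\textup{lcx}}\boldsymbol{\nu}$ (linear convex order) if $\boldsymbol{b}\cdot\boldsymbol{\mu}\succeq_{\textup{cx}}\boldsymbol{b}\cdot\boldsymbol{\nu}$ for all $\boldsymbol{b}\in\mathbb{R}^n$. The linear-Blackwell order: $F\succeq_{\textup{LB}}G$ if $\boldsymbol{p}_F(\boldsymbol{q})\succeq_{\textup{lcx}}\boldsymbol{p}_G(\boldsymbol{q})$ for every $\boldsymbol{q}\in\widehat{\Delta}_n$. *)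

theory Defs
  imports "HOL-Analysis.Analysis"
begin

(* An is_experiment on the signal space [lo, hi] is given by a function
  f :: real => real => real, with f t x the density of the signal at x in state t. *)

definition is_experiment :: "nat \<Rightarrow> (nat \<Rightarrow> real) \<Rightarrow> real \<Rightarrow> real \<Rightarrow> (real \<Rightarrow> real \<Rightarrow> real) \<Rightarrow> bool" where
  "is_experiment n \<theta> lo hi f \<longleftrightarrow> lo < hi \<and>
     (\<forall>i\<le>n. (\<forall>x\<in>{lo..hi}. 0 \<le> f (\<theta> i) x) \<and>
             f (\<theta> i) integrable_on {lo..hi} \<and> integral {lo..hi} (f (\<theta> i)) = 1)"

definition prior :: "nat \<Rightarrow> (nat \<Rightarrow> real) \<Rightarrow> bool" where
  "prior n q \<longleftrightarrow> (\<forall>i\<in>{1..n}. 0 \<le> q i \<and> q i \<le> 1) \<and> (\<Sum>i=1..n. q i) \<le> 1"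

definition prior_wt :: "nat \<Rightarrow> (nat \<Rightarrow> real) \<Rightarrow> nat \<Rightarrow> real" where
  "prior_wt n q i = (if i = 0 then 1 - (\<Sum>j=1..n. q j) else q i)"

definition mix_density :: "nat \<Rightarrow> (nat \<Rightarrow> real) \<Rightarrow> (real \<Rightarrow> real \<Rightarrow> real) \<Rightarrow> (nat \<Rightarrow> real) \<Rightarrow> real \<Rightarrow> real" where
  "mix_density n \<theta> f q x = (\<Sum>i=0..n. prior_wt n q i * f (\<theta> i) x)"

definition posterior :: "nat \<Rightarrow> (nat \<Rightarrow> real) \<Rightarrow> (real \<Rightarrow> real \<Rightarrow> real) \<Rightarrow> (nat \<Rightarrow> real) \<Rightarrow> nat \<Rightarrow> real \<Rightarrow> real" where
  "posterior n \<theta> f q i x = prior_wt n q i * f (\<theta> i) x / mix_density n \<theta> f q x"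

(* Convex order between scalar random variables phi1(X) and phi2(Y), where X has
  density h1 on [a1,b1] and Y has density h2 on [a2,b2]: equal means, and
  E[C(phi1 X)] >= E[C(phi2 Y)] for every convex C. *)
definition cx_ge :: "real \<Rightarrow> real \<Rightarrow> (real \<Rightarrow> real) \<Rightarrow> (real \<Rightarrow> real) \<Rightarrow>
                     real \<Rightarrow> real \<Rightarrow> (real \<Rightarrow> real) \<Rightarrow> (real \<Rightarrow> real) \<Rightarrow> bool" where
  "cx_ge a1 b1 h1 \<phi>1 a2 b2 h2 \<phi>2 \<longleftrightarrow>
     integral {a1..b1} (\<lambda>x. \<phi>1 x * h1 x) = integral {a2..b2} (\<lambda>y. \<phi>2 y * h2 y) \<and>
     (\<forall>C::real \<Rightarrow> real. convex_on UNIV C \<longrightarrow>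
        integral {a1..b1} (\<lambda>x. C (\<phi>1 x) * h1 x) \<ge> integral {a2..b2} (\<lambda>y. C (\<phi>2 y) * h2 y))"

definition post_lcx_ge :: "nat \<Rightarrow> (nat \<Rightarrow> real) \<Rightarrow> (nat \<Rightarrow> real) \<Rightarrow>
     real \<Rightarrow> real \<Rightarrow> (real \<Rightarrow> real \<Rightarrow> real) \<Rightarrow> real \<Rightarrow> real \<Rightarrow> (real \<Rightarrow> real \<Rightarrow> real) \<Rightarrow> bool" where
  "post_lcx_ge n \<theta> q xl xu f yl yu g \<longleftrightarrow>
     (\<forall>b::nat \<Rightarrow> real.
        cx_ge xl xu (mix_density n \<theta> f q) (\<lambda>x. \<Sum>i=1..n. b i * posterior n \<theta> f q i x)
              yl yu (mix_density n \<theta> g q) (\<lambda>y. \<Sum>i=1..n. b i * posterior n \<theta> g q i y))"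

definition LB_ge :: "nat \<Rightarrow> (nat \<Rightarrow> real) \<Rightarrow>
     real \<Rightarrow> real \<Rightarrow> (real \<Rightarrow> real \<Rightarrow> real) \<Rightarrow> real \<Rightarrow> real \<Rightarrow> (real \<Rightarrow> real \<Rightarrow> real) \<Rightarrow> bool" where
  "LB_ge n \<theta> xl xu f yl yu g \<longleftrightarrow> (\<forall>q. prior n q \<longrightarrow> post_lcx_ge n \<theta> q xl xu f yl yu g)"

end

theory Submission
  imports Defs
begin

(* For a prior q, the posterior mean (b . p_F(q))(x) times the mixture density f_q(x) is
   sum_{i>=1} b_i q_i f(x|theta_i).  Hence the call-option payoff E[(b . p_F(q) - t)+] equals
   the integral of (sum_i c_i f(x|theta_i))+ with c_i = (b_i - t) q_i (b_0 = 0), and every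
   coefficient vector c arises in this way from the uniform prior.  The means of b . p_F(q) and
   b . p_G(q) are both sum_i b_i q_i, and for bounded random variables with equal means the
   convex order is equivalent to domination of all call-option payoffs: on the bounded range of
   the posteriors a convex function is uniformly approximated by its piecewise-linear
   interpolant on a fine grid, which is an affine function plus a nonnegative combination of
   hinges (y - t_k)+. *)

definition hinge_sum ::
    "real \<Rightarrow> real \<Rightarrow> (nat \<Rightarrow> real) \<Rightarrow> (nat \<Rightarrow> real) \<Rightarrow> nat \<Rightarrow> real \<Rightarrow> real" where
  "hinge_sum \<alpha> \<beta> \<gamma> t N y = \<alpha> + \<beta> * y + (\<Sum>k<N. \<gamma> k * max (y - t k) 0)"

lemma convex_on_hinge: "convex_on UNIV (\<lambda>y::real. max (y - c) 0)"
proof (rule convex_onI)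
  fix u x y :: real
  assume "0 < u" "u < 1"
  then have "(1 - u) * (x - c) \<le> (1 - u) * max (x - c) 0" "u * (y - c) \<le> u * max (y - c) 0"
    and "0 \<le> (1 - u) * max (x - c) 0" "0 \<le> u * max (y - c) 0"
    by (simp_all add: mult_left_mono)
  moreover have "(1 - u) *\<^sub>R x + u *\<^sub>R y - c = (1 - u) * (x - c) + u * (y - c)"
    by (simp add: algebra_simps)
  ultimately show "max ((1 - u) *\<^sub>R x + u *\<^sub>R y - c) 0 \<le> (1 - u) * max (x - c) 0 + u * max (y - c) 0"
    by linarith
qed auto

lemma convex_on_slope_mono:
  fixes C :: "real \<Rightarrow> real"
  assumes "convex_on I C" "x \<in> I" "z \<in> I" "x < y" "y < z"
  shows "(C y - C x) / (y - x) \<le> (C z - C y) / (z - y)"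
proof -
  have "(C x - C y) / (x - y) \<le> (C y - C z) / (y - z)"
    using convex_on_slope_le[OF assms] by linarith
  moreover have "(u - v) / (p - q) = (v - u) / (q - p)" for u v p q :: real
    by (metis minus_diff_eq minus_divide_divide)
  ultimately show ?thesis
    by metis
qed

lemma hinge_sum_eq_piecewise_linear:
  fixes t v s \<gamma> :: "nat \<Rightarrow> real"
  assumes t: "mono t"
    and v: "\<And>k. v (Suc k) = v k + s k * (t (Suc k) - t k)"
    and \<gamma>: "\<gamma> 0 = 0" "\<And>k. \<gamma> (Suc k) = s (Suc k) - s k"
    and j: "j < N" "t j \<le> y" "y \<le> t (Suc j)"
  shows "hinge_sum (v 0 - s 0 * t 0) (s 0) \<gamma> t N y = v j + s j * (y - t j)"
proof -
  define L where "L m = hinge_sum (v 0 - s 0 * t 0) (s 0) \<gamma> t m y" for m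
  have prefix: "L (Suc i) = v i + s i * (y - t i)" if "t i \<le> y" for i
    using that
  proof (induction i)
    case 0
    then show ?case by (simp add: L_def hinge_sum_def \<gamma> algebra_simps)
  next
    case (Suc i)
    have "t i \<le> y" using Suc.prems monoD[OF t, of i "Suc i"] by simp
    then have "L (Suc (Suc i)) = v i + s i * (y - t i) + (s (Suc i) - s i) * (y - t (Suc i))"
      using Suc by (simp add: L_def hinge_sum_def \<gamma>)
    then show ?case by (simp add: v algebra_simps)
  qed
  have tail: "L N = L (Suc j)"
  proof -
    have "\<gamma> k * max (y - t k) 0 = 0" if "k \<in> {Suc j..<N}" for k
      using monoD[OF t, of "Suc j" k] that j(3) by simp
    then have "(\<Sum>k\<in>{Suc j..<N}. \<gamma> k * max (y - t k) 0) = 0"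
      by (rule sum.neutral[OF ballI])
    moreover have "(\<Sum>k\<in>{0..<N}. \<gamma> k * max (y - t k) 0) =
        (\<Sum>k\<in>{0..<Suc j}. \<gamma> k * max (y - t k) 0) + (\<Sum>k\<in>{Suc j..<N}. \<gamma> k * max (y - t k) 0)"
      using j(1) by (intro sum.atLeastLessThan_concat[symmetric]) simp_all
    ultimately show ?thesis
      by (simp only: L_def hinge_sum_def lessThan_atLeast0)
  qed
  show ?thesis using prefix tail j by (simp add: L_def)
qed

lemma interpolation_error_le:
  fixes c u0 u1 :: real
  assumes "x0 \<le> y" "y \<le> x1" "x0 < x1" "\<bar>c - u0\<bar> \<le> e" "\<bar>c - u1\<bar> \<le> e"
  shows "\<bar>c - (u0 + (u1 - u0) / (x1 - x0) * (y - x0))\<bar> \<le> e"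
proof -
  define l where "l = (y - x0) / (x1 - x0)"
  have l: "0 \<le> l" "l \<le> 1" using assms by (auto simp: l_def field_simps)
  have "(u1 - u0) / (x1 - x0) * (y - x0) = l * (u1 - u0)"
    by (simp add: l_def)
  then have "c - (u0 + (u1 - u0) / (x1 - x0) * (y - x0)) = (1 - l) * (c - u0) + l * (c - u1)"
    by (simp add: algebra_simps)
  moreover have "\<bar>(1 - l) * (c - u0)\<bar> \<le> (1 - l) * e" "\<bar>l * (c - u1)\<bar> \<le> l * e"
    using l assms(4,5) by (simp_all add: abs_mult mult_left_mono)
  ultimately have "\<bar>c - (u0 + (u1 - u0) / (x1 - x0) * (y - x0))\<bar> \<le> (1 - l) * e + l * e"
    by (smt (verit) abs_triangle_ineq)
  then show ?thesis by (simp add: algebra_simps)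
qed

lemma grid_cell:
  fixes a h y :: real
  assumes "0 < h" "0 < N" "a \<le> y" "y \<le> a + real N * h"
  obtains j where "j < N" "a + real j * h \<le> y" "y \<le> a + real (Suc j) * h"
proof (cases "y = a + real N * h")
  case True
  then show ?thesis
    using that[of "N - 1"] assms by (simp add: of_nat_diff algebra_simps)
next
  case False
  define r where "r = (y - a) / h"
  have r: "0 \<le> r" "r < N" "y = a + r * h"
    using assms False by (auto simp: r_def field_simps)
  define j where "j = nat \<lfloor>r\<rfloor>"
  have "real j \<le> r" "r < real j + 1" using r by (simp_all add: j_def)
  then have "j < N" "real j * h \<le> r * h" "r * h \<le> real (Suc j) * h"
    using r assms(1) by (auto intro: mult_right_mono)
  with r that show ?thesis by simp
qed

lemma uniform_grid_interpolation_error: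
  fixes C :: "real \<Rightarrow> real"
  assumes h: "0 < h" and N: "0 < N" and y: "a \<le> y" "y \<le> a + real N * h"
    and dC: "\<And>x y. x \<in> {a..a + real N * h} \<Longrightarrow> y \<in> {a..a + real N * h} \<Longrightarrow> \<bar>y - x\<bar> \<le> h
      \<Longrightarrow> \<bar>C y - C x\<bar> \<le> e"
  defines "t \<equiv> \<lambda>k. a + real k * h"
    and "s \<equiv> \<lambda>k. (C (a + real (Suc k) * h) - C (a + real k * h)) / h"
  shows "\<bar>C y - hinge_sum (C (t 0) - s 0 * t 0) (s 0) (\<lambda>k. if k = 0 then 0 else s k - s (k - 1)) t N y\<bar>
    \<le> e"
proof -
  have tSuc: "t (Suc k) - t k = h" for k by (simp add: t_def algebra_simps)
  have mono_t: "mono t" using h by (intro monoI) (simp add: t_def mult_right_mono)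
  have Ct: "C (t (Suc k)) = C (t k) + s k * (t (Suc k) - t k)" for k
    using h unfolding tSuc by (simp add: s_def t_def)
  obtain j where j: "j < N" "t j \<le> y" "y \<le> t (Suc j)"
    using grid_cell[OF h N y] by (auto simp: t_def)
  have "t 0 \<le> t j" "t (Suc j) \<le> t N" using j monoD[OF mono_t] by auto
  then have grid: "t j \<in> {a..a + real N * h}" "t (Suc j) \<in> {a..a + real N * h}"
    using j y by (auto simp: t_def)
  have "\<bar>C y - C (t j)\<bar> \<le> e" "\<bar>C y - C (t (Suc j))\<bar> \<le> e"
    using dC[OF grid(1)] dC[OF grid(2)] j y tSuc[of j] by auto
  then have "\<bar>C y - (C (t j) + (C (t (Suc j)) - C (t j)) / (t (Suc j) - t j) * (y - t j))\<bar> \<le> e"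
    using j h tSuc[of j] by (intro interpolation_error_le) auto
  moreover have "hinge_sum (C (t 0) - s 0 * t 0) (s 0) (\<lambda>k. if k = 0 then 0 else s k - s (k - 1)) t N y
      = C (t j) + s j * (y - t j)"
    by (rule hinge_sum_eq_piecewise_linear[OF mono_t Ct _ _ j]) simp_all
  moreover have "(C (t (Suc j)) - C (t j)) / (t (Suc j) - t j) = s j"
    unfolding tSuc by (simp add: s_def t_def)
  ultimately show ?thesis
    by (simp only:)
qed

lemma convex_on_uniform_approx_hinge_sum:
  fixes C :: "real \<Rightarrow> real"
  assumes cvx: "convex_on UNIV C" and ab: "a < b" and e: "0 < e"
  obtains \<alpha> \<beta> \<gamma> t N where "\<forall>k<N. 0 \<le> \<gamma> k"
    "\<forall>y\<in>{a..b}. \<bar>C y - hinge_sum \<alpha> \<beta> \<gamma> t N y\<bar> \<le> e"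
proof -
  have "uniformly_continuous_on {a..b} C"
    using convex_on_continuous[OF open_UNIV cvx]
    by (intro compact_uniformly_continuous) (auto intro: continuous_on_subset)
  then obtain d where d: "0 < d"
    and dC: "\<And>x y. x \<in> {a..b} \<Longrightarrow> y \<in> {a..b} \<Longrightarrow> \<bar>y - x\<bar> < d \<Longrightarrow> \<bar>C y - C x\<bar> < e"
    using e unfolding uniformly_continuous_on_def dist_real_def by metis
  obtain N :: nat where N: "(b - a) / d < real N" using reals_Archimedean2 by blast
  have N0: "0 < N" using N ab d by (cases N) (auto simp: field_simps)
  define h where "h = (b - a) / N"
  have h: "0 < h" "h < d" "a + real N * h = b" using N N0 ab d by (auto simp: h_def field_simps)
  define t where "t k = a + real k * h" for k
  define s where "s k = (C (t (Suc k)) - C (t k)) / h" for k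
  have slope_mono: "s m \<le> s (Suc m)" for m
    using convex_on_slope_mono[OF cvx UNIV_I UNIV_I, of "t m" "t (Suc m)" "t (Suc (Suc m))"] h(1)
    by (simp add: s_def t_def algebra_simps)
  have kinks_nonneg: "\<forall>k<N. 0 \<le> (if k = 0 then 0 else s k - s (k - 1))"
  proof (intro allI impI)
    fix k
    show "0 \<le> (if k = 0 then 0 else s k - s (k - 1))"
      using slope_mono[of "k - 1"] by (cases k) simp_all
  qed
  have "\<bar>C y - C x\<bar> \<le> e"
    if "x \<in> {a..a + real N * h}" "y \<in> {a..a + real N * h}" "\<bar>y - x\<bar> \<le> h" for x y
    using dC[of x y] that h(2,3) by simp
  then have "\<forall>y\<in>{a..b}.
      \<bar>C y - hinge_sum (C (t 0) - s 0 * t 0) (s 0) (\<lambda>k. if k = 0 then 0 else s k - s (k - 1)) t N y\<bar> \<le> e"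
    using uniform_grid_interpolation_error[OF h(1) N0] h(3) unfolding t_def s_def by auto
  with kinks_nonneg show thesis by (rule that)
qed

(* p(X) for a signal X with probability density h on S: bounded by B, and with the mean and
   all call-option payoffs E[(p(X) - t)+] integrable (this is not automatic for the
   Henstock-Kurzweil integral). *)
definition bounded_rv ::
    "'a::euclidean_space set \<Rightarrow> ('a \<Rightarrow> real) \<Rightarrow> ('a \<Rightarrow> real) \<Rightarrow> real \<Rightarrow> bool" where
  "bounded_rv S h p B \<longleftrightarrow> (\<forall>x\<in>S. 0 \<le> h x \<and> \<bar>p x\<bar> \<le> B) \<and> (h has_integral 1) S \<and>
     (\<lambda>x. p x * h x) integrable_on S \<and> (\<forall>t. (\<lambda>x. max (p x - t) 0 * h x) integrable_on S)"

lemma has_integral_hinge_sum_comp: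
  assumes "bounded_rv S h p B"
  shows "((\<lambda>x. hinge_sum \<alpha> \<beta> \<gamma> t N (p x) * h x) has_integral
     \<alpha> + \<beta> * integral S (\<lambda>x. p x * h x)
       + (\<Sum>k<N. \<gamma> k * integral S (\<lambda>x. max (p x - t k) 0 * h x))) S"
proof -
  have "(\<lambda>x. hinge_sum \<alpha> \<beta> \<gamma> t N (p x) * h x) =
      (\<lambda>x. \<alpha> * h x + \<beta> * (p x * h x) + (\<Sum>k<N. \<gamma> k * (max (p x - t k) 0 * h x)))"
    by (simp add: hinge_sum_def distrib_right sum_distrib_right mult.assoc)
  moreover have "((\<lambda>x. \<alpha> * h x) has_integral \<alpha> * 1) S"
    using assms by (intro has_integral_mult_right) (simp add: bounded_rv_def)
  ultimately show ?thesis
    using assms unfolding bounded_rv_def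
    by (auto intro!: has_integral_add has_integral_mult_right has_integral_sum)
qed

lemma integrable_of_uniform_approx:
  fixes u h :: "'a::euclidean_space \<Rightarrow> real"
  assumes h: "h integrable_on S"
    and approx: "\<And>e. 0 < e \<Longrightarrow> \<exists>v. v integrable_on S \<and> (\<forall>x\<in>S. \<bar>u x - v x\<bar> \<le> e * h x)"
  shows "u integrable_on S"
proof (rule integrable_straddle)
  fix e :: real
  assume e: "0 < e"
  define I where "I = integral S h"
  define e' where "e' = e / (2 * \<bar>I\<bar> + 1)"
  have e': "0 < e'" "2 * e' * \<bar>I\<bar> < e"
    using e by (auto simp: e'_def field_simps)
  obtain v where v: "v integrable_on S" "\<forall>x\<in>S. \<bar>u x - v x\<bar> \<le> e' * h x"
    using approx[OF e'(1)] by blast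
  have "((\<lambda>x. v x - e' * h x) has_integral integral S v - e' * I) S"
    "((\<lambda>x. v x + e' * h x) has_integral integral S v + e' * I) S"
    using v(1) h unfolding I_def
    by (auto intro!: has_integral_diff has_integral_add has_integral_mult_right)
  moreover have "\<bar>(integral S v - e' * I) - (integral S v + e' * I)\<bar> < e"
    using e' by (simp add: abs_mult algebra_simps)
  moreover have "\<forall>x\<in>S. v x - e' * h x \<le> u x \<and> u x \<le> v x + e' * h x"
    using v(2) by (auto simp: abs_le_iff)
  ultimately show "\<exists>g k i j. (g has_integral i) S \<and> (k has_integral j) S \<and> \<bar>i - j\<bar> < e \<and>
      (\<forall>x\<in>S. g x \<le> u x \<and> u x \<le> k x)"
    by blast
qed

lemma abs_integral_diff_le_of_uniform_approx:
  fixes u v h :: "'a::euclidean_space \<Rightarrow> real"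
  assumes "u integrable_on S" "v integrable_on S" "h integrable_on S"
    and "\<forall>x\<in>S. \<bar>u x - v x\<bar> \<le> e * h x"
  shows "\<bar>integral S u - integral S v\<bar> \<le> e * integral S h"
proof -
  have "norm (integral S (\<lambda>x. u x - v x)) \<le> integral S (\<lambda>x. e * h x)"
    using assms by (intro integral_norm_bound_integral integrable_diff integrable_on_mult_right) auto
  then show ?thesis
    using assms(1-3) by (simp add: integral_diff)
qed

lemma convex_comp_uniform_approx:
  assumes rv: "bounded_rv S h p B" and approx: "\<forall>y\<in>{-B..B}. \<bar>C y - \<phi> y\<bar> \<le> e"
  shows "\<forall>x\<in>S. \<bar>C (p x) * h x - \<phi> (p x) * h x\<bar> \<le> e * h x"
proof
  fix x assume x: "x \<in> S"
  then have "p x \<in> {-B..B}" "0 \<le> h x" using rv by (auto simp: bounded_rv_def abs_le_iff)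
  then show "\<bar>C (p x) * h x - \<phi> (p x) * h x\<bar> \<le> e * h x"
    using approx by (simp add: left_diff_distrib[symmetric] abs_mult mult_right_mono)
qed

lemma integrable_convex_comp:
  assumes rv: "bounded_rv S h p B" and B: "0 < B" and cvx: "convex_on UNIV C"
  shows "(\<lambda>x. C (p x) * h x) integrable_on S"
proof (rule integrable_of_uniform_approx)
  show "h integrable_on S" using rv by (auto simp: bounded_rv_def)
  fix e :: real assume "0 < e"
  moreover have "-B < B" using B by simp
  ultimately obtain \<alpha> \<beta> \<gamma> t N where "\<forall>k<N. 0 \<le> \<gamma> k"
    "\<forall>y\<in>{-B..B}. \<bar>C y - hinge_sum \<alpha> \<beta> \<gamma> t N y\<bar> \<le> e"
    by (metis convex_on_uniform_approx_hinge_sum[OF cvx])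
  then show "\<exists>v. v integrable_on S \<and> (\<forall>x\<in>S. \<bar>C (p x) * h x - v x\<bar> \<le> e * h x)"
    using convex_comp_uniform_approx[OF rv] has_integral_hinge_sum_comp[OF rv] by blast
qed

lemma abs_integral_convex_comp_diff_le:
  assumes rv: "bounded_rv S h p B" and B: "0 < B" and cvx: "convex_on UNIV C"
    and approx: "\<forall>y\<in>{-B..B}. \<bar>C y - hinge_sum \<alpha> \<beta> \<gamma> t N y\<bar> \<le> e"
  shows "\<bar>integral S (\<lambda>x. C (p x) * h x) - integral S (\<lambda>x. hinge_sum \<alpha> \<beta> \<gamma> t N (p x) * h x)\<bar> \<le> e"
proof -
  have "\<bar>integral S (\<lambda>x. C (p x) * h x) - integral S (\<lambda>x. hinge_sum \<alpha> \<beta> \<gamma> t N (p x) * h x)\<bar>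
      \<le> e * integral S h"
    using rv integrable_convex_comp[OF rv B cvx]
      has_integral_hinge_sum_comp[OF rv, THEN has_integral_integrable]
      convex_comp_uniform_approx[OF rv approx]
    by (intro abs_integral_diff_le_of_uniform_approx) (auto simp: bounded_rv_def)
  moreover have "integral S h = 1"
    using rv by (simp add: bounded_rv_def integral_unique)
  ultimately show ?thesis by simp
qed

theorem convex_order_of_hinge_dominance:
  assumes rv1: "bounded_rv S1 h1 p1 B" and rv2: "bounded_rv S2 h2 p2 B" and B: "0 < B"
    and mean: "integral S1 (\<lambda>x. p1 x * h1 x) = integral S2 (\<lambda>x. p2 x * h2 x)"
    and hinge: "\<And>t. integral S2 (\<lambda>x. max (p2 x - t) 0 * h2 x)
      \<le> integral S1 (\<lambda>x. max (p1 x - t) 0 * h1 x)"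
    and cvx: "convex_on UNIV C"
  shows "integral S2 (\<lambda>x. C (p2 x) * h2 x) \<le> integral S1 (\<lambda>x. C (p1 x) * h1 x)"
proof (rule field_le_epsilon)
  fix e :: real assume "0 < e"
  then have "0 < e / 2" "-B < B" using B by simp_all
  then obtain \<alpha> \<beta> \<gamma> t N where \<gamma>: "\<forall>k<N. 0 \<le> \<gamma> k"
    and approx: "\<forall>y\<in>{-B..B}. \<bar>C y - hinge_sum \<alpha> \<beta> \<gamma> t N y\<bar> \<le> e / 2"
    using convex_on_uniform_approx_hinge_sum[OF cvx] by metis
  have "(\<Sum>k<N. \<gamma> k * integral S2 (\<lambda>x. max (p2 x - t k) 0 * h2 x)) \<le>
        (\<Sum>k<N. \<gamma> k * integral S1 (\<lambda>x. max (p1 x - t k) 0 * h1 x))"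
    using \<gamma> hinge by (intro sum_mono mult_left_mono) auto
  then have "integral S2 (\<lambda>x. hinge_sum \<alpha> \<beta> \<gamma> t N (p2 x) * h2 x)
      \<le> integral S1 (\<lambda>x. hinge_sum \<alpha> \<beta> \<gamma> t N (p1 x) * h1 x)"
    using mean by (simp add: integral_unique[OF has_integral_hinge_sum_comp[OF rv1]]
        integral_unique[OF has_integral_hinge_sum_comp[OF rv2]])
  then show "integral S2 (\<lambda>x. C (p2 x) * h2 x) \<le> integral S1 (\<lambda>x. C (p1 x) * h1 x) + e"
    using abs_integral_convex_comp_diff_le[OF rv1 B cvx approx]
      abs_integral_convex_comp_diff_le[OF rv2 B cvx approx] by linarith
qed


lemma prior_wt_nonneg: "prior n q \<Longrightarrow> i \<le> n \<Longrightarrow> 0 \<le> prior_wt n q i"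
  by (cases "i = 0") (auto simp: prior_wt_def prior_def)

lemma sum_prior_wt: "(\<Sum>i=0..n. prior_wt n q i) = 1"
  by (simp add: sum.atLeast_Suc_atMost prior_wt_def)

lemma experiment_density_nonneg:
  "is_experiment n \<theta> lo hi f \<Longrightarrow> i \<le> n \<Longrightarrow> x \<in> {lo..hi} \<Longrightarrow> 0 \<le> f (\<theta> i) x"
  by (simp add: is_experiment_def)

lemma has_integral_experiment_density:
  "is_experiment n \<theta> lo hi f \<Longrightarrow> i \<le> n \<Longrightarrow> (f (\<theta> i) has_integral 1) {lo..hi}"
  unfolding is_experiment_def by (metis has_integral_integral)

lemma integrable_positive_part_comb:
  assumes "is_experiment n \<theta> lo hi f"
  shows "(\<lambda>x. max (\<Sum>i=0..n. c i * f (\<theta> i) x) 0) integrable_on {lo..hi}"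
proof -
  have "f (\<theta> i) absolutely_integrable_on {lo..hi}" if "i \<le> n" for i
    using has_integral_integrable[OF has_integral_experiment_density[OF assms that]]
      experiment_density_nonneg[OF assms that]
    by (intro nonnegative_absolutely_integrable_1) auto
  then have "(\<lambda>x. \<Sum>i=0..n. c i * f (\<theta> i) x) absolutely_integrable_on {lo..hi}"
    by (intro absolutely_integrable_sum set_integrable_mult_right) auto
  then have "(\<lambda>x. max (\<Sum>i=0..n. c i * f (\<theta> i) x) 0) absolutely_integrable_on {lo..hi}"
    by (intro absolutely_integrable_max_1) auto
  then show ?thesis by (simp add: absolutely_integrable_on_def)
qed

context
  fixes n \<theta> lo hi f q
  assumes ex: "is_experiment n \<theta> lo hi f" and pr: "prior n q"
begin

lemma weighted_density_nonneg: "i \<le> n \<Longrightarrow> x \<in> {lo..hi} \<Longrightarrow> 0 \<le> prior_wt n q i * f (\<theta> i) x"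
  using prior_wt_nonneg[OF pr] experiment_density_nonneg[OF ex] by simp

lemma mix_density_nonneg: "x \<in> {lo..hi} \<Longrightarrow> 0 \<le> mix_density n \<theta> f q x"
  unfolding mix_density_def using weighted_density_nonneg by (intro sum_nonneg) simp

lemma has_integral_mix_density: "(mix_density n \<theta> f q has_integral 1) {lo..hi}"
proof -
  have "((\<lambda>x. \<Sum>i=0..n. prior_wt n q i * f (\<theta> i) x) has_integral
      (\<Sum>i=0..n. prior_wt n q i * 1)) {lo..hi}"
    using has_integral_experiment_density[OF ex] by (intro has_integral_sum has_integral_mult_right) auto
  then show ?thesis by (simp add: sum_prior_wt mix_density_def[abs_def])
qed

lemma posterior_mean_mult_mix_density:
  assumes x: "x \<in> {lo..hi}"
  shows "(\<Sum>i=1..n. b i * posterior n \<theta> f q i x) * mix_density n \<theta> f q x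
    = (\<Sum>i=1..n. b i * (prior_wt n q i * f (\<theta> i) x))"
proof (cases "mix_density n \<theta> f q x = 0")
  case True
  then have "prior_wt n q i * f (\<theta> i) x = 0" if "i \<in> {0..n}" for i
    using that x weighted_density_nonneg sum_nonneg_eq_0_iff[of "{0..n}" "\<lambda>i. prior_wt n q i * f (\<theta> i) x"]
    by (auto simp: mix_density_def)
  then have "(\<Sum>i=1..n. b i * (prior_wt n q i * f (\<theta> i) x)) = 0"
    by (intro sum.neutral) simp
  with True show ?thesis by simp
next
  case False
  then have cancel: "b i * posterior n \<theta> f q i x * mix_density n \<theta> f q x
      = b i * (prior_wt n q i * f (\<theta> i) x)" for i
    by (simp add: posterior_def)
  show ?thesis
    by (simp only: sum_distrib_right cancel)
qed

lemma posterior_hinge_mult_mix_density: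
  assumes x: "x \<in> {lo..hi}"
  shows "max ((\<Sum>i=1..n. b i * posterior n \<theta> f q i x) - t) 0 * mix_density n \<theta> f q x
    = max (\<Sum>i=0..n. ((b(0 := 0)) i - t) * prior_wt n q i * f (\<theta> i) x) 0"
proof -
  have "max ((\<Sum>i=1..n. b i * posterior n \<theta> f q i x) - t) 0 * mix_density n \<theta> f q x
      = max ((\<Sum>i=1..n. b i * posterior n \<theta> f q i x) * mix_density n \<theta> f q x
          - t * mix_density n \<theta> f q x) 0"
    using mix_density_nonneg[OF x] by (simp add: max_mult_distrib_right left_diff_distrib)
  also have "(\<Sum>i=1..n. b i * posterior n \<theta> f q i x) * mix_density n \<theta> f q x
      = (\<Sum>i=0..n. (b(0 := 0)) i * prior_wt n q i * f (\<theta> i) x)"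
    by (subst posterior_mean_mult_mix_density[OF x]) (simp add: sum.atLeast_Suc_atMost mult.assoc)
  also have "t * mix_density n \<theta> f q x = (\<Sum>i=0..n. t * prior_wt n q i * f (\<theta> i) x)"
    by (simp add: mix_density_def sum_distrib_left mult.assoc)
  finally show ?thesis
    by (simp add: left_diff_distrib sum_subtractf)
qed

lemma abs_posterior_mean_le:
  assumes x: "x \<in> {lo..hi}"
  shows "\<bar>\<Sum>i=1..n. b i * posterior n \<theta> f q i x\<bar> \<le> (\<Sum>i=1..n. \<bar>b i\<bar>)"
proof -
  have "0 \<le> posterior n \<theta> f q i x \<and> posterior n \<theta> f q i x \<le> 1" if i: "i \<in> {1..n}" for i
  proof -
    have "prior_wt n q i * f (\<theta> i) x \<le> mix_density n \<theta> f q x"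
      unfolding mix_density_def using x i weighted_density_nonneg by (intro member_le_sum) auto
    then show ?thesis
      using x i weighted_density_nonneg[of i x] by (auto simp: posterior_def divide_le_eq_1)
  qed
  then have "\<bar>b i * posterior n \<theta> f q i x\<bar> \<le> \<bar>b i\<bar>" if "i \<in> {1..n}" for i
    using that by (auto simp: abs_mult intro: mult_left_le)
  then have "(\<Sum>i=1..n. \<bar>b i * posterior n \<theta> f q i x\<bar>) \<le> (\<Sum>i=1..n. \<bar>b i\<bar>)"
    by (rule sum_mono)
  then show ?thesis
    using sum_abs[of "\<lambda>i. b i * posterior n \<theta> f q i x" "{1..n}"] by linarith
qed

lemma has_integral_posterior_mean:
  "((\<lambda>x. (\<Sum>i=1..n. b i * posterior n \<theta> f q i x) * mix_density n \<theta> f q x) has_integral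
     (\<Sum>i=1..n. b i * q i)) {lo..hi}"
proof -
  have "((\<lambda>x. \<Sum>i=1..n. b i * (prior_wt n q i * f (\<theta> i) x)) has_integral
      (\<Sum>i=1..n. b i * (prior_wt n q i * 1))) {lo..hi}"
    using has_integral_experiment_density[OF ex]
    by (intro has_integral_sum has_integral_mult_right) auto
  moreover have "(\<Sum>i=1..n. b i * (prior_wt n q i * 1)) = (\<Sum>i=1..n. b i * q i)"
    by (intro sum.cong) (auto simp: prior_wt_def)
  ultimately show ?thesis
    by (metis (no_types, lifting) has_integral_eq posterior_mean_mult_mix_density)
qed

lemma bounded_rv_posterior_mean:
  "bounded_rv {lo..hi} (mix_density n \<theta> f q) (\<lambda>x. \<Sum>i=1..n. b i * posterior n \<theta> f q i x)
     (1 + (\<Sum>i=1..n. \<bar>b i\<bar>))"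
  unfolding bounded_rv_def
proof (intro conjI ballI allI)
  fix x assume x: "x \<in> {lo..hi}"
  show "0 \<le> mix_density n \<theta> f q x"
    using mix_density_nonneg[OF x] .
  show "\<bar>\<Sum>i=1..n. b i * posterior n \<theta> f q i x\<bar> \<le> 1 + (\<Sum>i=1..n. \<bar>b i\<bar>)"
    using abs_posterior_mean_le[OF x, of b] by linarith
next
  fix t
  show "(\<lambda>x. max ((\<Sum>i=1..n. b i * posterior n \<theta> f q i x) - t) 0 * mix_density n \<theta> f q x)
      integrable_on {lo..hi}"
    using integrable_positive_part_comb[OF ex, of "\<lambda>i. ((b(0 := 0)) i - t) * prior_wt n q i"]
    by (rule integrable_eq) (rule posterior_hinge_mult_mix_density[symmetric])
qed (use has_integral_mix_density has_integral_posterior_mean in \<open>auto intro: has_integral_integrable\<close>)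

end

lemma prior_uniform: "prior n (\<lambda>_. 1 / real (n + 1))"
  by (simp add: prior_def field_simps)

lemma prior_wt_uniform: "prior_wt n (\<lambda>_. 1 / real (n + 1)) i = 1 / real (n + 1)"
  by (simp add: prior_wt_def field_simps)

lemma hinge_integral_le_if_LB_ge:
  assumes exF: "is_experiment n \<theta> xl xu f" and exG: "is_experiment n \<theta> yl yu g"
    and LB: "LB_ge n \<theta> xl xu f yl yu g"
  shows "integral {yl..yu} (\<lambda>y. max (\<Sum>i=0..n. b i * g (\<theta> i) y) 0)
    \<le> integral {xl..xu} (\<lambda>x. max (\<Sum>i=0..n. b i * f (\<theta> i) x) 0)"
proof -
  define q :: "nat \<Rightarrow> real" where "q = (\<lambda>_. 1 / real (n + 1))"
  define b' where "b' i = b i - b 0" for i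
  define t where "t = - b 0"
  let ?call = "\<lambda>h x. max ((\<Sum>i=1..n. b' i * posterior n \<theta> h q i x) - t) 0 * mix_density n \<theta> h q x"
  have pr: "prior n q"
    unfolding q_def by (rule prior_uniform)
  have wt: "prior_wt n q i = 1 / real (n + 1)" for i
    unfolding q_def by (rule prior_wt_uniform)
  have coeff: "((b'(0 := 0)) i - t) * prior_wt n q i = b i / real (n + 1)" for i
    by (cases "i = 0") (simp_all add: wt b'_def t_def)
  have scaled: "integral {lo..hi} (?call h)
      = integral {lo..hi} (\<lambda>x. max (\<Sum>i=0..n. b i * h (\<theta> i) x) 0) / real (n + 1)"
    if ex: "is_experiment n \<theta> lo hi h" for lo hi h
  proof -
    have "integral {lo..hi} (?call h)
        = integral {lo..hi} (\<lambda>x. max (\<Sum>i=0..n. b i / real (n + 1) * h (\<theta> i) x) 0)"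
      by (rule integral_cong) (simp only: posterior_hinge_mult_mix_density[OF ex pr] coeff)
    also have "\<dots> = integral {lo..hi} (\<lambda>x. max (\<Sum>i=0..n. b i * h (\<theta> i) x) 0 / real (n + 1))"
      by (simp add: sum_divide_distrib max_divide_distrib_right)
    finally show ?thesis by simp
  qed
  have "post_lcx_ge n \<theta> q xl xu f yl yu g"
    using LB pr by (simp add: LB_ge_def)
  then have "integral {yl..yu} (?call g) \<le> integral {xl..xu} (?call f)"
    using convex_on_hinge unfolding post_lcx_ge_def cx_ge_def by blast
  then show ?thesis
    unfolding scaled[OF exF] scaled[OF exG] by (simp add: divide_le_cancel)
qed

lemma LB_ge_if_hinge_integral_le:
  assumes exF: "is_experiment n \<theta> xl xu f" and exG: "is_experiment n \<theta> yl yu g"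
    and hinge: "\<And>c. integral {yl..yu} (\<lambda>y. max (\<Sum>i=0..n. c i * g (\<theta> i) y) 0)
      \<le> integral {xl..xu} (\<lambda>x. max (\<Sum>i=0..n. c i * f (\<theta> i) x) 0)"
  shows "LB_ge n \<theta> xl xu f yl yu g"
  unfolding LB_ge_def post_lcx_ge_def cx_ge_def
proof (intro allI impI)
  fix q b assume pr: "prior n q"
  let ?pF = "\<lambda>x. \<Sum>i=1..n. b i * posterior n \<theta> f q i x"
  let ?pG = "\<lambda>y. \<Sum>i=1..n. b i * posterior n \<theta> g q i y"
  have mean: "integral {xl..xu} (\<lambda>x. ?pF x * mix_density n \<theta> f q x)
      = integral {yl..yu} (\<lambda>y. ?pG y * mix_density n \<theta> g q y)"
    using integral_unique[OF has_integral_posterior_mean[OF exF pr, of b]]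
      integral_unique[OF has_integral_posterior_mean[OF exG pr, of b]] by simp
  have "integral {yl..yu} (\<lambda>y. max (?pG y - t) 0 * mix_density n \<theta> g q y)
      \<le> integral {xl..xu} (\<lambda>x. max (?pF x - t) 0 * mix_density n \<theta> f q x)" for t
  proof -
    define c where "c i = ((b(0 := 0)) i - t) * prior_wt n q i" for i
    have "integral {xl..xu} (\<lambda>x. max (?pF x - t) 0 * mix_density n \<theta> f q x)
        = integral {xl..xu} (\<lambda>x. max (\<Sum>i=0..n. c i * f (\<theta> i) x) 0)"
      unfolding c_def by (rule integral_cong) (rule posterior_hinge_mult_mix_density[OF exF pr])
    moreover have "integral {yl..yu} (\<lambda>y. max (?pG y - t) 0 * mix_density n \<theta> g q y)
        = integral {yl..yu} (\<lambda>y. max (\<Sum>i=0..n. c i * g (\<theta> i) y) 0)"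
      unfolding c_def by (rule integral_cong) (rule posterior_hinge_mult_mix_density[OF exG pr])
    ultimately show ?thesis
      using hinge[of c] by simp
  qed
  moreover have "0 < 1 + (\<Sum>i=1..n. \<bar>b i\<bar>)"
    by (simp add: add_pos_nonneg sum_nonneg)
  ultimately have "integral {yl..yu} (\<lambda>y. C (?pG y) * mix_density n \<theta> g q y)
      \<le> integral {xl..xu} (\<lambda>x. C (?pF x) * mix_density n \<theta> f q x)" if "convex_on UNIV C" for C
    using convex_order_of_hinge_dominance[OF bounded_rv_posterior_mean[OF exF pr]
        bounded_rv_posterior_mean[OF exG pr] _ mean _ that] by blast
  with mean show "integral {xl..xu} (\<lambda>x. ?pF x * mix_density n \<theta> f q x)
      = integral {yl..yu} (\<lambda>y. ?pG y * mix_density n \<theta> g q y) \<and>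
    (\<forall>C. convex_on UNIV C \<longrightarrow> integral {yl..yu} (\<lambda>y. C (?pG y) * mix_density n \<theta> g q y)
      \<le> integral {xl..xu} (\<lambda>x. C (?pF x) * mix_density n \<theta> f q x))"
    by blast
qed

theorem lemma1:
  fixes n :: nat and \<theta> :: "nat \<Rightarrow> real"
    and xl xu yl yu :: real and f g :: "real \<Rightarrow> real \<Rightarrow> real"
  assumes "inj_on \<theta> {0..n}"
    and "is_experiment n \<theta> xl xu f"
    and "is_experiment n \<theta> yl yu g"
  shows "LB_ge n \<theta> xl xu f yl yu g \<longleftrightarrow>
    (\<forall>b::nat \<Rightarrow> real.
       integral {xl..xu} (\<lambda>x. max (\<Sum>i=0..n. b i * f (\<theta> i) x) 0)
         \<ge> integral {yl..yu} (\<lambda>y. max (\<Sum>i=0..n. b i * g (\<theta> i) y) 0))"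
  using hinge_integral_le_if_LB_ge[OF assms(2,3)] LB_ge_if_hinge_integral_le[OF assms(2,3)] by blast

end
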